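(* Let $f$ be a probability density on $\mathbb{R}$ symmetric about $0$, let $G$ be an absolutely continuous cumulative distribution function on $\mathbb{R}$ symmetric about $0$ with density $g$, and let $\omega:\mathbb{R}\to\mathbb{R}$ be an odd function with $\omega(x)>0$ for $x>0$. Assume $g$ is a bounded probability density and $\int_0^\infty\omega(x)f(x)\,dx<\infty$, and define $$\pi_{TV}(\lambda\mid 1,1)=2\int_0^\infty \omega(x)\,f(x)\,g(\lambda\,\omega(x))\,dx,\qquad \lambda\in\mathbb{R}.$$ Then: (i) $\pi_{TV}(\lambda\mid 1,1)$ is symmetric about $\lambda=0$; (ii) if $g$ is unimodal, then $\pi_{TV}(\lambda\mid 1,1)$ is decreasing in $|\lambda|$; (iii) if $\omega(x)=x$, $f$ is unimodal, $f(0)=M<\infty$ and $\int_0^\infty x\,g(x)\,dx<\infty$, then the tails of $\pi_{TV}(\lambda\mid 1,1)$ are of order $O(|\lambda|^{-2})$ as $|\lambda|\to\infty$.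
   Context: This $\pi_{TV}(\lambda\mid1,1)$ is the $BTV(1,1)$ prior for the skewness parameter $\lambda$ of the skew-symmetric densities $\frac{2}{\sigma}f\left(\frac{x-\mu}{\sigma}\right)G\left(\lambda\,\omega\left(\frac{x-\mu}{\sigma}\right)\right)$; it equals $\frac{d}{d\lambda}M_{TV}(\lambda)$ where $M_{TV}(\lambda)=\operatorname{sign}(\lambda)\frac12\int_{\mathbb{R}}|2G(\lambda\omega(x))-1|f(x)\,dx$. *)

theory Defs
  imports "HOL-Analysis.Analysis" "HOL-Library.Landau_Symbols"
begin

definition prob_density :: "(real \<Rightarrow> real) \<Rightarrow> bool" where
  "prob_density h \<longleftrightarrow> h \<in> borel_measurable borel \<and> (\<forall>x. 0 \<le> h x) \<and>
     integrable lborel h \<and> integral\<^sup>L lborel h = 1"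

definition unimodal :: "(real \<Rightarrow> real) \<Rightarrow> bool" where
  "unimodal h \<longleftrightarrow> (\<exists>m. mono_on {..m} h \<and> antimono_on {m..} h)"

definition piTV :: "(real \<Rightarrow> real) \<Rightarrow> (real \<Rightarrow> real) \<Rightarrow> (real \<Rightarrow> real) \<Rightarrow> real \<Rightarrow> real" where
  "piTV \<omega> f g l = 2 * (LINT x:{0..}|lborel. \<omega> x * f x * g (l * \<omega> x))"

end

theory Submission
  imports Defs
begin

text \<open>
  Symmetry of \<open>\<pi>\<^sub>T\<^sub>V\<close> is symmetry of \<open>g\<close> inside the integrand, and the monotonicity in \<open>\<bar>\<lambda>\<bar>\<close> is
  the pointwise monotonicity of a symmetric unimodal \<open>g\<close> in \<open>\<bar>\<lambda> \<omega>(x)\<bar>\<close>, since \<open>\<omega> \<ge> 0\<close> on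
  \<open>[0,\<infinity>)\<close>. For the tails, substituting \<open>y = \<lambda>x\<close> turns \<open>\<integral>\<^sub>0\<^sup>\<infinity> x f(x) g(\<lambda>x) dx\<close> into
  \<open>\<lambda>\<^sup>-\<^sup>2 \<integral>\<^sub>0\<^sup>\<infinity> y f(y/\<lambda>) g(y) dy \<le> \<lambda>\<^sup>-\<^sup>2 (sup f) \<integral>\<^sub>0\<^sup>\<infinity> y g(y) dy\<close>, and a unimodal \<open>f\<close> is
  bounded by its value at the mode.
\<close>

lemma unimodal_bdd_above:
  fixes h :: "real \<Rightarrow> real"
  assumes "unimodal h"
  shows "\<exists>M. \<forall>x. h x \<le> M"
proof -
  obtain m where up: "mono_on {..m} h" and down: "antimono_on {m..} h"
    using assms unfolding unimodal_def by blast
  have "h x \<le> h m" for x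
    using mono_onD[OF up, of x m] monotone_onD[OF down, of m x] by (cases "x \<le> m") auto
  then show ?thesis by blast
qed

lemma unimodal_even_antimono_abs:
  fixes h :: "real \<Rightarrow> real"
  assumes "unimodal h" and even: "\<And>x. h (- x) = h x" and "\<bar>a\<bar> \<le> \<bar>b\<bar>"
  shows "h b \<le> h a"
proof -
  obtain m where up: "mono_on {..m} h" and down: "antimono_on {m..} h"
    using assms(1) unfolding unimodal_def by blast
  have decreasing: "h v \<le> h u" if "0 \<le> u" "u \<le> v" for u v
  proof (cases "m \<le> u")
    case True
    then show ?thesis using monotone_onD[OF down, of u v] that by auto
  next
    case False
    then have "h (- v) \<le> h (- u)" if "v \<le> m"
      using mono_onD[OF up, of "- v" "- u"] \<open>0 \<le> u\<close> \<open>u \<le> v\<close> that by auto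
    moreover have "h v \<le> h (- u)" if "m < v"
      using monotone_onD[OF down, of m v] mono_onD[OF up, of "- m" "- u"] False \<open>0 \<le> u\<close> that
        even[of m] by auto
    ultimately show ?thesis using even by force
  qed
  have "h \<bar>x\<bar> = h x" for x
    using even[of x] by (cases "x \<ge> 0") auto
  then show ?thesis using decreasing[of "\<bar>a\<bar>" "\<bar>b\<bar>"] assms(3) by simp
qed

lemma set_integrable_mult_bounded:
  fixes \<phi> \<psi> :: "'a \<Rightarrow> real"
  assumes "set_integrable M A \<phi>" and [measurable]: "\<psi> \<in> borel_measurable M"
    and "\<And>x. \<bar>\<psi> x\<bar> \<le> B"
  shows "set_integrable M A (\<lambda>x. \<phi> x * \<psi> x)"
proof (rule set_integrable_bound)
  show "set_integrable M A (\<lambda>x. B * \<phi> x)"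
    using assms(1) by simp
  have "(\<lambda>x. indicator A x *\<^sub>R \<phi> x) \<in> borel_measurable M"
    using assms(1) unfolding set_integrable_def by (rule borel_measurable_integrable)
  then show "set_borel_measurable M A (\<lambda>x. \<phi> x * \<psi> x)"
    unfolding set_borel_measurable_def by (simp add: mult.assoc[symmetric])
  have "\<bar>\<phi> x\<bar> * \<bar>\<psi> x\<bar> \<le> \<bar>\<phi> x\<bar> * \<bar>B\<bar>" for x
    using assms(3)[of x] by (intro mult_left_mono) auto
  then show "AE x in M. x \<in> A \<longrightarrow> norm (\<phi> x * \<psi> x) \<le> norm (B * \<phi> x)"
    by (simp add: abs_mult mult.commute)
qed

lemma set_integral_atLeast0_rescale:
  fixes h :: "real \<Rightarrow> real"
  assumes "c > 0"
  shows "(LINT x:{0..}|lborel. h x) = (LINT x:{0..}|lborel. h (x / c)) / c"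
proof -
  have "(LINT x:{0..}|lborel. h x) = \<bar>1 / c\<bar> *\<^sub>R (LINT x|lborel. indicator {0..} (x / c) * h (x / c))"
    unfolding set_lebesgue_integral_def
    using lborel_integral_real_affine[of "1 / c" "\<lambda>x. indicator {0..} x *\<^sub>R h x" 0] assms by simp
  also have "(\<lambda>x. indicator {0..} (x / c) :: real) = indicator {0..}"
    using assms by (auto simp: fun_eq_iff indicator_def zero_le_divide_iff)
  finally show ?thesis
    using assms by (simp add: set_lebesgue_integral_def)
qed

lemma piTV_uminus:
  fixes \<omega> f g :: "real \<Rightarrow> real"
  assumes "\<And>x. g (- x) = g x"
  shows "piTV \<omega> f g (- l) = piTV \<omega> f g l"
  unfolding piTV_def by (simp add: assms)

lemma piTV_nonneg:
  assumes "\<And>x. 0 \<le> f x" and "\<And>x. 0 \<le> g x" and "\<And>x. 0 \<le> x \<Longrightarrow> 0 \<le> \<omega> x"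
  shows "0 \<le> piTV \<omega> f g l"
  unfolding piTV_def set_lebesgue_integral_def using assms
  by (auto intro!: Bochner_Integration.integral_nonneg simp: indicator_def)

lemma piTV_antimono_abs:
  assumes "unimodal g" and "\<And>x. g (- x) = g x"
    and "\<And>x. 0 \<le> f x" and "\<And>x. 0 \<le> x \<Longrightarrow> 0 \<le> \<omega> x"
    and integrable: "\<And>l. set_integrable lborel {0..} (\<lambda>x. \<omega> x * f x * g (l * \<omega> x))"
    and "\<bar>a\<bar> \<le> \<bar>b\<bar>"
  shows "piTV \<omega> f g b \<le> piTV \<omega> f g a"
proof -
  have "\<omega> x * f x * g (b * \<omega> x) \<le> \<omega> x * f x * g (a * \<omega> x)" if "x \<ge> 0" for x
  proof -
    have "\<bar>a * \<omega> x\<bar> \<le> \<bar>b * \<omega> x\<bar>"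
      using assms(4,6) that by (simp add: abs_mult mult_right_mono)
    then have "g (b * \<omega> x) \<le> g (a * \<omega> x)"
      using unimodal_even_antimono_abs assms(1,2) by blast
    then show ?thesis
      using assms(3,4) that by (intro mult_left_mono) auto
  qed
  then show ?thesis
    unfolding piTV_def by (auto intro!: set_integral_mono integrable)
qed

lemma piTV_id_le:
  assumes "\<And>x. 0 \<le> f x" and "\<And>x. f x \<le> M" and "\<And>x. 0 \<le> g x"
    and "set_integrable lborel {0..} (\<lambda>x. x * g x)" and "l > 0"
  shows "piTV (\<lambda>x. x) f g l \<le> 2 * M * (LINT x:{0..}|lborel. x * g x) / l\<^sup>2"
proof -
  have "(LINT x:{0..}|lborel. x * f x * g (l * x)) = (LINT x:{0..}|lborel. x / l * f (x / l) * g x) / l"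
    using set_integral_atLeast0_rescale[of l "\<lambda>x. x * f x * g (l * x)"] \<open>l > 0\<close> by simp
  also have "(LINT x:{0..}|lborel. x / l * f (x / l) * g x) \<le> (LINT x:{0..}|lborel. M / l * (x * g x))"
    unfolding set_lebesgue_integral_def
  proof (rule integral_mono')
    have "set_integrable lborel {0..} (\<lambda>x. M / l * (x * g x))"
      using assms(4) by simp
    then show "integrable lborel (\<lambda>x. indicator {0..} x *\<^sub>R (M / l * (x * g x)))"
      unfolding set_integrable_def .
    fix x :: real
    have "x * g x / l * f (x / l) \<le> x * g x / l * M" if "x \<ge> 0"
      using assms(2,3) \<open>l > 0\<close> that by (intro mult_left_mono) auto
    moreover have "0 \<le> M" using assms(1,2) order_trans by blast
    ultimately show "indicator {0..} x *\<^sub>R (x / l * f (x / l) * g x) \<le> indicator {0..} x *\<^sub>R (M / l * (x * g x))"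
      and "0 \<le> indicator {0..} x *\<^sub>R (M / l * (x * g x))"
      using assms(3) \<open>l > 0\<close> by (auto simp: indicator_def mult_ac)
  qed
  finally show ?thesis
    using \<open>l > 0\<close> by (simp add: piTV_def power2_eq_square divide_right_mono)
qed

lemma piTV_id_bigo:
  assumes "\<And>x. g (- x) = g x" and "\<And>x. 0 \<le> f x" and "\<And>x. f x \<le> M" and "\<And>x. 0 \<le> g x"
    and "set_integrable lborel {0..} (\<lambda>x. x * g x)"
  shows "piTV (\<lambda>x. x) f g \<in> O[at_infinity](\<lambda>l. 1 / l\<^sup>2)"
proof (rule bigoI[where c = "2 * M * (LINT x:{0..}|lborel. x * g x)"])
  have "norm (piTV (\<lambda>x. x) f g l) \<le> 2 * M * (LINT x:{0..}|lborel. x * g x) * norm (1 / l\<^sup>2)"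
    if "l \<noteq> 0" for l :: real
  proof -
    have "piTV (\<lambda>x. x) f g l = piTV (\<lambda>x. x) f g \<bar>l\<bar>"
      using piTV_uminus[where g = g, OF assms(1)] by (simp add: abs_if)
    also have "\<dots> \<le> 2 * M * (LINT x:{0..}|lborel. x * g x) / \<bar>l\<bar>\<^sup>2"
      using piTV_id_le[OF assms(2-5), of "\<bar>l\<bar>"] that by simp
    finally show ?thesis
      using piTV_nonneg[of f g "\<lambda>x. x" l] assms(2,4) by simp
  qed
  then show "\<forall>\<^sub>F l in at_infinity. norm (piTV (\<lambda>x. x) f g l)
      \<le> 2 * M * (LINT x:{0..}|lborel. x * g x) * norm (1 / l\<^sup>2)"
    unfolding eventually_at_infinity by (intro exI[of _ 1]) auto
qed

theorem theorem1:
  fixes f g G \<omega> :: "real \<Rightarrow> real"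
  assumes f_dens: "prob_density f"
    and f_sym: "\<And>x. f (- x) = f x"
    and g_dens: "prob_density g"
    and g_sym: "\<And>x. g (- x) = g x"
    and G_cdf: "\<And>x. G x = (LINT t:{..x}|lborel. g t)"
    and G_sym: "\<And>x. G (- x) = 1 - G x"
    and g_bdd: "\<exists>B. \<forall>x. g x \<le> B"
    and \<omega>_meas: "\<omega> \<in> borel_measurable borel"
    and \<omega>_odd: "\<And>x. \<omega> (- x) = - \<omega> x"
    and \<omega>_pos: "\<And>x. x > 0 \<Longrightarrow> \<omega> x > 0"
    and \<omega>f_int: "set_integrable lborel {0..} (\<lambda>x. \<omega> x * f x)"
  shows "(\<forall>l. piTV \<omega> f g (- l) = piTV \<omega> f g l)
       \<and> (unimodal g \<longrightarrow> (\<forall>a b. \<bar>a\<bar> \<le> \<bar>b\<bar> \<longrightarrow> piTV \<omega> f g b \<le> piTV \<omega> f g a))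
       \<and> ((\<forall>x. \<omega> x = x) \<and> unimodal f \<and> set_integrable lborel {0..} (\<lambda>x. x * g x)
            \<longrightarrow> piTV \<omega> f g \<in> O[at_infinity](\<lambda>l. 1 / l ^ 2))"
proof -
  obtain B where "\<And>x. g x \<le> B" using g_bdd by blast
  moreover have g_nonneg: "\<And>x. 0 \<le> g x" and [measurable]: "g \<in> borel_measurable borel"
    using g_dens unfolding prob_density_def by auto
  ultimately have "\<And>x. \<bar>g x\<bar> \<le> B" by (simp add: abs_of_nonneg)
  then have integrable: "\<And>l. set_integrable lborel {0..} (\<lambda>x. \<omega> x * f x * g (l * \<omega> x))"
    using \<omega>_meas by (intro set_integrable_mult_bounded[OF \<omega>f_int]) auto
  have f_nonneg: "\<And>x. 0 \<le> f x"
    using f_dens unfolding prob_density_def by auto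
  have \<omega>_nonneg: "\<And>x. 0 \<le> x \<Longrightarrow> 0 \<le> \<omega> x"
    using \<omega>_pos \<omega>_odd[of 0] by (metis add.inverse_neutral less_eq_real_def neg_equal_zero)
  have "piTV \<omega> f g \<in> O[at_infinity](\<lambda>l. 1 / l\<^sup>2)"
    if "\<forall>x. \<omega> x = x" "unimodal f" "set_integrable lborel {0..} (\<lambda>x. x * g x)"
  proof -
    obtain M where "\<And>x. f x \<le> M" using unimodal_bdd_above \<open>unimodal f\<close> by blast
    then show ?thesis
      using piTV_id_bigo[where f = f, OF g_sym f_nonneg _ g_nonneg that(3)] that(1)
      by (metis (no_types) ext)
  qed
  then show ?thesis
    using piTV_uminus[where g = g, OF g_sym] piTV_antimono_abs[OF _ g_sym f_nonneg \<omega>_nonneg integrable]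
    by (auto simp: power2_eq_square)
qed

end
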